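(* Let $\bar F$ be an $n$-superelliptic curve which admits a unique $n$-superelliptic automorphism group $G\cong\mathbb{Z}/n\mathbb{Z}$. Then $\sigma\circ\tau=\tau\circ\sigma$ for every $\sigma\in G$ and every $\tau\in\mathrm{Aut}(\bar F)$.
   Context: An $n$-superelliptic curve is a smooth projective curve birational to an affine curve $y^n=F(x)$ with $F$ a separable polynomial; for such a model, the subgroup of $\mathrm{Aut}(\bar F)$ generated by $(x,y)\mapsto(x,\xi y)$, $\xi$ a primitive $n$-th root of unity, is called an $n$-superelliptic automorphism group of $\bar F$. *)

theory Defs
  imports "HOL-Computational_Algebra.Polynomial"
begin

text \<open>The function field of the curve is modelled as the ambient field type 'a;
  the constant field is a subfield k of it, assumed algebraically closed.\<close>

definition is_subfield :: "'a::field set \<Rightarrow> bool" where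
  "is_subfield L \<longleftrightarrow> 0 \<in> L \<and> 1 \<in> L \<and>
     (\<forall>a\<in>L. \<forall>b\<in>L. a + b \<in> L \<and> a - b \<in> L \<and> a * b \<in> L) \<and>
     (\<forall>a\<in>L. inverse a \<in> L)"

definition poly_over :: "'a::field set \<Rightarrow> 'a poly \<Rightarrow> bool" where
  "poly_over k p \<longleftrightarrow> (\<forall>i. coeff p i \<in> k)"

definition alg_closed_subfield :: "'a::field set \<Rightarrow> bool" where
  "alg_closed_subfield k \<longleftrightarrow> is_subfield k \<and>
     (\<forall>p. poly_over k p \<and> degree p > 0 \<longrightarrow> (\<exists>r\<in>k. poly p r = 0))"

definition field_gen :: "'a::field set \<Rightarrow> 'a set \<Rightarrow> 'a set" where
  "field_gen k S = \<Inter>{L. is_subfield L \<and> k \<union> S \<subseteq> L}"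

definition transcendental_over :: "'a::field set \<Rightarrow> 'a \<Rightarrow> bool" where
  "transcendental_over k x \<longleftrightarrow> (\<forall>p. poly_over k p \<and> p \<noteq> 0 \<longrightarrow> poly p x \<noteq> 0)"

text \<open>k-automorphisms of the function field (= automorphisms of the curve).\<close>
definition Aut :: "'a::field set \<Rightarrow> ('a \<Rightarrow> 'a) set" where
  "Aut k = {s. bij s \<and> (\<forall>a b. s (a + b) = s a + s b) \<and> (\<forall>a b. s (a * b) = s a * s b)
              \<and> s 1 = 1 \<and> (\<forall>c\<in>k. s c = c)}"

definition superelliptic_model :: "'a::field set \<Rightarrow> nat \<Rightarrow> 'a \<Rightarrow> 'a \<Rightarrow> 'a poly \<Rightarrow> bool" where
  "superelliptic_model k n x y F \<longleftrightarrow> n \<ge> 2 \<and> transcendental_over k x \<and>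
     field_gen k {x, y} = UNIV \<and> poly_over k F \<and> degree F > 0 \<and> rsquarefree F \<and>
     y ^ n = poly F x"

definition primitive_root :: "nat \<Rightarrow> 'a::field \<Rightarrow> bool" where
  "primitive_root n \<xi> \<longleftrightarrow> \<xi> ^ n = 1 \<and> (\<forall>j. 0 < j \<and> j < n \<longrightarrow> \<xi> ^ j \<noteq> 1)"

definition superelliptic_curve :: "'a::field set \<Rightarrow> nat \<Rightarrow> bool" where
  "superelliptic_curve k n \<longleftrightarrow> (\<exists>x y F. superelliptic_model k n x y F)"

definition superelliptic_group :: "'a::field set \<Rightarrow> nat \<Rightarrow> ('a \<Rightarrow> 'a) set \<Rightarrow> bool" where
  "superelliptic_group k n G \<longleftrightarrow> (\<exists>x y F \<xi> s. superelliptic_model k n x y F \<and>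
      \<xi> \<in> k \<and> primitive_root n \<xi> \<and> s \<in> Aut k \<and> s x = x \<and> s y = \<xi> * y \<and>
      G = {s ^^ j | j. True})"

end

theory Submission
  imports Defs "HOL-Computational_Algebra.Primes"
begin

text \<open>Let \<open>G\<close> be generated by \<open>s: (x, y) \<mapsto> (x, \<xi> y)\<close> and let \<open>\<tau>\<close> be any automorphism. Then
  \<open>\<tau> s \<tau>\<^sup>-\<^sup>1\<close> generates the superelliptic group of the model \<open>(\<tau> x, \<tau> y)\<close>, so by uniqueness it is a
  power of \<open>s\<close> and vice versa. Hence \<open>\<tau> x\<close> is \<open>s\<close>-invariant, i.e.\ \<open>\<tau> x \<in> k(x)\<close>, and \<open>\<tau> y\<close> is an
  eigenvector of \<open>s\<close>; decomposing \<open>k(x, y) = \<Oplus>\<^sub>i\<^sub><\<^sub>n k(x) y\<^sup>i\<close> into eigenspaces gives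
  \<open>\<tau> y = a(x) y\<^sup>m\<close>. Symmetrically \<open>x \<in> k(\<tau> x)\<close>, so \<open>x \<mapsto> \<tau> x\<close> is a Moebius transformation and
  \<open>a\<^sup>n F(x)\<^sup>m = F(\<tau> x)\<close> compares orders of vanishing at a simple root of \<open>F\<close>: this forces \<open>m = 1\<close>,
  whence \<open>\<tau> s \<tau>\<^sup>-\<^sup>1 = s\<close>. If \<open>deg F = 1\<close> the curve is rational and its superelliptic group is never
  unique.\<close>

section \<open>Subfields and polynomials over a subfield\<close>

lemma subfieldD:
  assumes "is_subfield L"
  shows "0 \<in> L" "1 \<in> L" "a \<in> L \<Longrightarrow> b \<in> L \<Longrightarrow> a + b \<in> L"
    "a \<in> L \<Longrightarrow> b \<in> L \<Longrightarrow> a - b \<in> L" "a \<in> L \<Longrightarrow> b \<in> L \<Longrightarrow> a * b \<in> L"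
    "a \<in> L \<Longrightarrow> inverse a \<in> L"
  using assms unfolding is_subfield_def by auto

lemma subfield_uminus: "is_subfield L \<Longrightarrow> a \<in> L \<Longrightarrow> - a \<in> L"
  by (metis diff_0 subfieldD(1,4))

lemma subfield_divide: "is_subfield L \<Longrightarrow> a \<in> L \<Longrightarrow> b \<in> L \<Longrightarrow> a / b \<in> L"
  by (simp add: divide_inverse subfieldD)

lemma subfield_power: "is_subfield L \<Longrightarrow> a \<in> L \<Longrightarrow> a ^ m \<in> L"
  by (induction m) (auto intro: subfieldD)

lemma alg_closed_subfield_is_subfield: "alg_closed_subfield k \<Longrightarrow> is_subfield k"
  by (simp add: alg_closed_subfield_def)

lemma poly_over_coeff: "poly_over k p \<Longrightarrow> coeff p i \<in> k"
  by (simp add: poly_over_def)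

lemma poly_over_pCons_iff: "poly_over k (pCons a p) \<longleftrightarrow> a \<in> k \<and> poly_over k p"
  unfolding poly_over_def by (metis coeff_pCons_0 coeff_pCons_Suc not0_implies_Suc coeff_pCons)

lemma poly_over_0 [simp]: "is_subfield k \<Longrightarrow> poly_over k 0"
  by (simp add: poly_over_def subfieldD)

lemma poly_over_pCons: "is_subfield k \<Longrightarrow> a \<in> k \<Longrightarrow> poly_over k p \<Longrightarrow> poly_over k (pCons a p)"
  by (simp add: poly_over_pCons_iff)

lemma poly_over_const: "is_subfield k \<Longrightarrow> a \<in> k \<Longrightarrow> poly_over k [:a:]"
  by (simp add: poly_over_pCons)

lemma poly_over_1: "is_subfield k \<Longrightarrow> poly_over k 1"
  by (metis one_pCons poly_over_const subfieldD(2))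

lemma poly_over_X: "is_subfield k \<Longrightarrow> poly_over k [:0, 1:]"
  by (simp add: poly_over_pCons subfieldD)

lemma poly_over_linear: "is_subfield k \<Longrightarrow> t \<in> k \<Longrightarrow> poly_over k [:- t, 1:]"
  by (simp add: poly_over_pCons subfield_uminus subfieldD)

lemma poly_over_add: "is_subfield k \<Longrightarrow> poly_over k p \<Longrightarrow> poly_over k q \<Longrightarrow> poly_over k (p + q)"
  by (simp add: poly_over_def subfieldD)

lemma poly_over_diff: "is_subfield k \<Longrightarrow> poly_over k p \<Longrightarrow> poly_over k q \<Longrightarrow> poly_over k (p - q)"
  by (simp add: poly_over_def subfieldD)

lemma poly_over_smult: "is_subfield k \<Longrightarrow> a \<in> k \<Longrightarrow> poly_over k p \<Longrightarrow> poly_over k (smult a p)"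
  by (simp add: poly_over_def subfieldD)

lemma poly_over_mult: "is_subfield k \<Longrightarrow> poly_over k p \<Longrightarrow> poly_over k q \<Longrightarrow> poly_over k (p * q)"
  by (induction p) (auto simp: poly_over_pCons_iff intro: poly_over_add poly_over_smult poly_over_pCons subfieldD)

lemma poly_over_power: "is_subfield k \<Longrightarrow> poly_over k p \<Longrightarrow> poly_over k (p ^ m)"
  by (induction m) (auto simp: poly_over_1 poly_over_mult)

lemma poly_over_sum: "is_subfield k \<Longrightarrow> (\<And>i. i \<in> A \<Longrightarrow> poly_over k (f i)) \<Longrightarrow> poly_over k (sum f A)"
  by (induction A rule: infinite_finite_induct) (auto intro: poly_over_add)

lemma poly_in_subfield: "is_subfield k \<Longrightarrow> poly_over k p \<Longrightarrow> c \<in> k \<Longrightarrow> poly p c \<in> k"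
  by (induction p) (auto intro: subfieldD simp: poly_over_pCons_iff)

lemma poly_over_synthetic_div:
  "is_subfield k \<Longrightarrow> poly_over k p \<Longrightarrow> c \<in> k \<Longrightarrow> poly_over k (synthetic_div p c)"
  by (induction p) (auto simp: poly_over_pCons_iff intro!: poly_over_pCons poly_in_subfield)

lemma poly_over_root_factor:
  assumes "is_subfield k" "poly_over k p" "c \<in> k" "poly p c = 0"
  obtains q where "poly_over k q" "p = [:- c, 1:] * q"
proof
  show "poly_over k (synthetic_div p c)" using assms by (simp add: poly_over_synthetic_div)
  show "p = [:- c, 1:] * synthetic_div p c" using synthetic_div_correct'[of c p] assms(4) by simp
qed

lemma field_gen_subfield: "is_subfield (field_gen k S)"
  unfolding field_gen_def is_subfield_def by auto

lemma field_gen_superset: "k \<union> S \<subseteq> field_gen k S"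
  unfolding field_gen_def by auto

lemma field_gen_UNIV_imp_subfield_UNIV:
  "field_gen k S = UNIV \<Longrightarrow> is_subfield L \<Longrightarrow> k \<union> S \<subseteq> L \<Longrightarrow> L = UNIV"
  unfolding field_gen_def by auto

lemma transcendental_poly_nonzero:
  "transcendental_over k x \<Longrightarrow> poly_over k p \<Longrightarrow> p \<noteq> 0 \<Longrightarrow> poly p x \<noteq> 0"
  unfolding transcendental_over_def by auto

lemma transcendental_poly_eq:
  assumes "transcendental_over k x" "is_subfield k" "poly_over k p" "poly_over k q"
    "poly p x = poly q x"
  shows "p = q"
  using assms transcendental_poly_nonzero[of k x "p - q"] by (auto simp: poly_over_diff)

lemma transcendental_not_in:
  assumes "transcendental_over k x" "is_subfield k"
  shows "x \<notin> k"
  using transcendental_poly_nonzero[OF assms(1) poly_over_linear[OF assms(2)], of x] by auto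

lemma alg_closed_root_in_subfield:
  assumes "alg_closed_subfield k" "poly_over k p" "p \<noteq> 0" "poly p z = 0"
  shows "z \<in> k"
  using assms(2-4)
proof (induction "degree p" arbitrary: p rule: less_induct)
  case less
  have sf: "is_subfield k" using assms(1) alg_closed_subfield_is_subfield by blast
  show ?case
  proof (cases "degree p = 0")
    case True
    then obtain a where "p = [:a:]" by (metis degree_eq_zeroE)
    then show ?thesis using less.prems by simp
  next
    case False
    then obtain r where r: "r \<in> k" "poly p r = 0"
      using assms(1) less.prems unfolding alg_closed_subfield_def by auto
    then obtain q where q: "poly_over k q" "p = [:- r, 1:] * q"
      using poly_over_root_factor[OF sf less.prems(1)] by blast
    have "q \<noteq> 0" using less.prems q by auto
    then have "degree q < degree p" unfolding q(2) by (subst degree_mult_eq) auto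
    moreover have "z = r \<or> poly q z = 0" using less.prems(3) q(2) by auto
    ultimately show ?thesis using less.hyps q(1) r(1) \<open>q \<noteq> 0\<close> by blast
  qed
qed

lemma alg_closed_transcendental_iff:
  assumes "alg_closed_subfield k"
  shows "transcendental_over k z \<longleftrightarrow> z \<notin> k"
  using alg_closed_root_in_subfield[OF assms] transcendental_not_in[of k z]
    alg_closed_subfield_is_subfield[OF assms]
  unfolding transcendental_over_def by blast

section \<open>Automorphisms\<close>

lemma funpow_comp_commute: "f \<circ> g = g \<circ> f \<Longrightarrow> (f ^^ i) \<circ> g = g \<circ> (f ^^ i)"
  by (induction i) (simp_all, metis comp_assoc)

lemma generator_in_powers: "(f :: 'a \<Rightarrow> 'a) \<in> {f ^^ j | j. True}"
proof -
  have "f = f ^^ 1" by simp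
  then show ?thesis by blast
qed

lemma AutD:
  assumes "s \<in> Aut k"
  shows "bij s" "s (a + b) = s a + s b" "s (a * b) = s a * s b" "s 1 = 1" "c \<in> k \<Longrightarrow> s c = c"
  using assms unfolding Aut_def by auto

lemma Aut_zero: assumes "s \<in> Aut k" shows "s 0 = 0"
proof -
  have "s 0 + s 0 = s 0 + 0" using AutD(2)[OF assms, of 0 0] by simp
  then show ?thesis by (rule add_left_imp_eq)
qed

lemma Aut_eq_0_iff: assumes "s \<in> Aut k" shows "s a = 0 \<longleftrightarrow> a = 0"
  using inj_eq[OF bij_is_inj[OF AutD(1)[OF assms]], of a 0] Aut_zero[OF assms] by simp

lemma Aut_uminus: assumes "s \<in> Aut k" shows "s (- a) = - s a"
  using AutD(2)[OF assms, of "- a" a] Aut_zero[OF assms] by (simp add: eq_neg_iff_add_eq_0)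

lemma Aut_diff: "s \<in> Aut k \<Longrightarrow> s (a - b) = s a - s b"
  by (metis AutD(2) Aut_uminus diff_conv_add_uminus)

lemma Aut_inverse: assumes "s \<in> Aut k" shows "s (inverse a) = inverse (s a)"
proof (cases "a = 0")
  case True
  then show ?thesis using Aut_zero[OF assms] by simp
next
  case False
  then have "s a * s (inverse a) = 1" using AutD(3,4)[OF assms] by (metis right_inverse)
  then show ?thesis by (metis inverse_unique)
qed

lemma Aut_divide: "s \<in> Aut k \<Longrightarrow> s (a / b) = s a / s b"
  by (simp add: divide_inverse AutD(3) Aut_inverse)

lemma Aut_power: "s \<in> Aut k \<Longrightarrow> s (a ^ m) = s a ^ m"
  by (induction m) (auto simp: AutD(3,4))

lemma Aut_sum: "s \<in> Aut k \<Longrightarrow> s (sum f A) = (\<Sum>i\<in>A. s (f i))"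
  by (induction A rule: infinite_finite_induct) (auto simp: AutD(2) Aut_zero)

lemma Aut_prod: "s \<in> Aut k \<Longrightarrow> s (prod f A) = (\<Prod>i\<in>A. s (f i))"
  by (induction A rule: infinite_finite_induct) (auto simp: AutD(3,4))

lemma Aut_poly: "s \<in> Aut k \<Longrightarrow> poly_over k p \<Longrightarrow> s (poly p z) = poly p (s z)"
  by (induction p) (auto simp: poly_over_pCons_iff AutD Aut_zero)

lemma Aut_inv_left: "s \<in> Aut k \<Longrightarrow> inv s (s z) = z"
  by (meson AutD(1) bij_is_inj inv_f_f)

lemma Aut_inv_right: "s \<in> Aut k \<Longrightarrow> s (inv s z) = z"
  by (meson AutD(1) bij_is_surj surj_f_inv_f)

lemma Aut_inv: assumes "s \<in> Aut k" shows "inv s \<in> Aut k"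
  unfolding Aut_def
proof (intro CollectI conjI allI ballI)
  show "bij (inv s)" using AutD(1)[OF assms] by (simp add: bij_imp_bij_inv)
  note si = Aut_inv_right[OF assms] and is' = Aut_inv_left[OF assms]
  fix a b
  have "a + b = s (inv s a + inv s b)" by (simp add: AutD(2)[OF assms] si)
  then show "inv s (a + b) = inv s a + inv s b" by (simp add: is')
  have "a * b = s (inv s a * inv s b)" by (simp add: AutD(3)[OF assms] si)
  then show "inv s (a * b) = inv s a * inv s b" by (simp add: is')
next
  show "inv s 1 = 1" using Aut_inv_left[OF assms, of 1] AutD(4)[OF assms] by simp
next
  fix c assume "c \<in> k"
  then show "inv s c = c" using Aut_inv_left[OF assms, of c] AutD(5)[OF assms] by simp
qed

lemma Aut_comp: "f \<in> Aut k \<Longrightarrow> g \<in> Aut k \<Longrightarrow> f \<circ> g \<in> Aut k"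
  unfolding Aut_def by (auto intro: bij_comp)

lemma Aut_funpow: "f \<in> Aut k \<Longrightarrow> f ^^ m \<in> Aut k"
  by (induction m) (auto simp: Aut_comp, simp add: Aut_def)

lemma Aut_funpow_scale:
  assumes "s \<in> Aut k" "is_subfield k" "c \<in> k" "s y = c * y"
  shows "(s ^^ m) y = c ^ m * y"
  by (induction m) (use assms in \<open>auto simp: AutD(3,5) subfield_power\<close>)

lemma Aut_eqI_on_generators:
  assumes "f \<in> Aut k" "g \<in> Aut k" "field_gen k S = UNIV" "\<And>z. z \<in> S \<Longrightarrow> f z = g z"
  shows "f = g"
proof -
  have "is_subfield {z. f z = g z}"
    unfolding is_subfield_def using assms(1,2) by (auto simp: Aut_zero AutD Aut_diff Aut_inverse)
  moreover have "k \<union> S \<subseteq> {z. f z = g z}" using assms by (auto simp: AutD(5))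
  ultimately show ?thesis using field_gen_UNIV_imp_subfield_UNIV[OF assms(3)] by blast
qed

lemma Aut_image_generates:
  assumes "field_gen k S = UNIV" "t \<in> Aut k"
  shows "field_gen k (t ` S) = UNIV"
proof -
  let ?M = "field_gen k (t ` S)"
  have "is_subfield {z. t z \<in> ?M}"
    using subfieldD[OF field_gen_subfield[of k "t ` S"]] unfolding is_subfield_def
    by (auto simp: Aut_zero[OF assms(2)] AutD[OF assms(2)] Aut_diff[OF assms(2)] Aut_inverse[OF assms(2)])
  moreover have "k \<union> S \<subseteq> {z. t z \<in> ?M}"
    using field_gen_superset[of k "t ` S"] AutD(5)[OF assms(2)] by auto
  ultimately have "\<And>z. t (inv t z) \<in> ?M"
    using field_gen_UNIV_imp_subfield_UNIV[OF assms(1)] by blast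
  then show ?thesis using Aut_inv_right[OF assms(2)] by auto
qed

lemma Aut_image_superelliptic_model:
  assumes "superelliptic_model k n x y F" "t \<in> Aut k"
  shows "superelliptic_model k n (t x) (t y) F"
proof -
  have "poly p (t x) \<noteq> 0" if "poly_over k p" "p \<noteq> 0" for p
    using assms(1) that Aut_poly[OF assms(2) that(1)] Aut_eq_0_iff[OF assms(2)]
    unfolding superelliptic_model_def transcendental_over_def by metis
  then have "transcendental_over k (t x)" unfolding transcendental_over_def by blast
  moreover have "field_gen k {t x, t y} = UNIV"
    using Aut_image_generates[OF _ assms(2), of "{x, y}"] assms(1)
    unfolding superelliptic_model_def by simp
  moreover have "t y ^ n = poly F (t x)"
    using assms Aut_power[OF assms(2)] Aut_poly[OF assms(2)] unfolding superelliptic_model_def by metis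
  ultimately show ?thesis using assms(1) unfolding superelliptic_model_def by auto
qed

section \<open>Roots of unity\<close>

lemma power_mod_order:
  fixes \<xi> :: "'a::monoid_mult"
  assumes "\<xi> ^ n = 1"
  shows "\<xi> ^ a = \<xi> ^ (a mod n)"
proof -
  have "\<xi> ^ a = \<xi> ^ (n * (a div n) + a mod n)" by simp
  also have "\<dots> = (\<xi> ^ n) ^ (a div n) * \<xi> ^ (a mod n)" by (simp only: power_add power_mult)
  finally show ?thesis using assms by simp
qed

lemma primitive_root_power_eq_1_iff:
  assumes "primitive_root n \<xi>" "n > 0"
  shows "\<xi> ^ a = 1 \<longleftrightarrow> n dvd a"
proof -
  have "\<xi> ^ a = \<xi> ^ (a mod n)" using assms(1) power_mod_order unfolding primitive_root_def by blast
  moreover have "a mod n < n" using assms(2) by simp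
  ultimately show ?thesis using assms(1) unfolding primitive_root_def by (auto simp: dvd_eq_mod_eq_0)
qed

lemma primitive_root_neq_1:
  assumes "primitive_root n \<xi>" "n \<ge> 2"
  shows "\<xi> \<noteq> 1"
proof
  assume "\<xi> = 1"
  then have "\<xi> ^ 1 = 1" by simp
  moreover have "0 < (1::nat)" "1 < n" using assms(2) by simp_all
  ultimately show False using assms(1) unfolding primitive_root_def by blast
qed

lemma primitive_root_of_nat_nonzero:
  fixes \<xi> :: "'a::field"
  assumes "primitive_root n \<xi>" "n > 0"
  shows "of_nat n \<noteq> (0 :: 'a)"
proof
  assume "of_nat n = (0 :: 'a)"
  then have char: "CHAR('a) dvd n" "CHAR('a) > 0"
    using assms(2) of_nat_eq_0_iff_char_dvd CHAR_pos_iff by blast+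
  have p: "prime CHAR('a)" using char(2) by (rule prime_CHAR_semidom)
  obtain q where q: "n = CHAR('a) * q" using char(1) by blast
  then have "0 < q" "q < n" using assms(2) prime_gt_1_nat[OF p] by (auto simp: gr0I)
  \<comment> \<open>In characteristic \<open>p\<close>, \<open>X\<^sup>p - 1 = (X - 1)\<^sup>p\<close>, so the \<open>p\<close>-th root of unity \<open>\<xi>\<^sup>q\<close> is 1.\<close>
  have "(\<xi> ^ q + (- 1)) ^ CHAR('a) = (\<xi> ^ q) ^ CHAR('a) + (- 1) ^ CHAR('a)"
    by (rule freshmans_dream[OF p refl])
  also have "\<dots> = 1 + (- 1) ^ CHAR('a)"
    using assms(1) q unfolding primitive_root_def by (simp add: power_mult[symmetric] mult.commute)
  also have "\<dots> = (1 + (- 1)) ^ CHAR('a)"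
    using freshmans_dream[OF p refl, of 1 "- 1"] by simp
  finally have "\<xi> ^ q + (- 1) = 0" using p by (simp add: prime_gt_0_nat power_0_left)
  then have "\<xi> ^ q = 1" by simp
  then show False using assms(1) \<open>0 < q\<close> \<open>q < n\<close> unfolding primitive_root_def by blast
qed

lemma primitive_root_geometric_sum:
  fixes \<xi> :: "'a::field"
  assumes "primitive_root n \<xi>" "n > 0"
  shows "(\<Sum>l<n. (\<xi> ^ a) ^ l) = (if n dvd a then of_nat n else 0)"
proof (cases "n dvd a")
  case True
  then have "\<xi> ^ a = 1" using primitive_root_power_eq_1_iff[OF assms] by simp
  then show ?thesis using True by simp
next
  case False
  have "(\<xi> ^ a) ^ n = (\<xi> ^ n) ^ a" by (simp only: power_mult[symmetric] mult.commute)
  then have "(\<xi> ^ a) ^ n = 1" using assms(1) unfolding primitive_root_def by simp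
  then show ?thesis
    using False primitive_root_power_eq_1_iff[OF assms] sum_gp_strict[of "\<xi> ^ a" n] by simp
qed

lemma dvd_shifted_difference_iff:
  fixes i m n :: nat
  assumes "i < n" "m < n"
  shows "n dvd (i + n - m) \<longleftrightarrow> i = m"
proof
  assume "n dvd (i + n - m)"
  then obtain q where q: "i + n - m = n * q" by blast
  then have "n * 0 < n * q" "n * q < n * 2" using assms by linarith+
  then have "q = 1" by (simp only: mult_less_cancel1) linarith
  then show "i = m" using q assms by simp
qed simp

section \<open>Rational functions in one generator\<close>

definition rational_functions :: "'a::field set \<Rightarrow> 'a \<Rightarrow> 'a set" where
  "rational_functions k z = {poly P z / poly Q z | P Q. poly_over k P \<and> poly_over k Q \<and> Q \<noteq> 0}"

lemma rational_functionsI: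
  "poly_over k P \<Longrightarrow> poly_over k Q \<Longrightarrow> Q \<noteq> 0 \<Longrightarrow> a = poly P z / poly Q z \<Longrightarrow> a \<in> rational_functions k z"
  unfolding rational_functions_def by blast

lemma rational_functionsE:
  assumes "a \<in> rational_functions k z"
  obtains C D where "poly_over k C" "poly_over k D" "D \<noteq> 0" "a = poly C z / poly D z"
  using assms unfolding rational_functions_def by blast

lemma rational_functions_subfield:
  assumes sf: "is_subfield k" and tz: "transcendental_over k z"
  shows "is_subfield (rational_functions k z)"
  unfolding is_subfield_def
proof (intro conjI ballI)
  have p1: "poly_over k 1" using sf by (rule poly_over_1)
  show "0 \<in> rational_functions k z" by (rule rational_functionsI[of k 0 1]) (simp_all add: sf p1)
  show "1 \<in> rational_functions k z" by (rule rational_functionsI[of k 1 1]) (simp_all add: p1)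
next
  fix a b assume "a \<in> rational_functions k z" "b \<in> rational_functions k z"
  then obtain P1 Q1 P2 Q2 where
    pq: "poly_over k P1" "poly_over k Q1" "Q1 \<noteq> 0" "a = poly P1 z / poly Q1 z"
        "poly_over k P2" "poly_over k Q2" "Q2 \<noteq> 0" "b = poly P2 z / poly Q2 z"
    by (metis rational_functionsE)
  have q: "poly Q1 z \<noteq> 0" "poly Q2 z \<noteq> 0" using transcendental_poly_nonzero[OF tz] pq by auto
  have QQ: "poly_over k (Q1 * Q2)" "Q1 * Q2 \<noteq> 0" using pq poly_over_mult[OF sf] by auto
  show "a + b \<in> rational_functions k z"
    unfolding pq(4,8) by (rule rational_functionsI[OF _ QQ, of "P1 * Q2 + P2 * Q1"])
       (use sf pq(1-3,5-7) q in \<open>auto intro: poly_over_add poly_over_mult simp: field_simps\<close>)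
  show "a - b \<in> rational_functions k z"
    unfolding pq(4,8) by (rule rational_functionsI[OF _ QQ, of "P1 * Q2 - P2 * Q1"])
       (use sf pq(1-3,5-7) q in \<open>auto intro: poly_over_diff poly_over_mult simp: field_simps\<close>)
  show "a * b \<in> rational_functions k z"
    unfolding pq(4,8) by (rule rational_functionsI[OF _ QQ, of "P1 * P2"])
       (use sf pq(1-3,5-7) q in \<open>auto intro: poly_over_mult\<close>)
next
  fix a assume "a \<in> rational_functions k z"
  then obtain P Q where pq: "poly_over k P" "poly_over k Q" "Q \<noteq> 0" "a = poly P z / poly Q z"
    by (rule rational_functionsE)
  show "inverse a \<in> rational_functions k z"
  proof (cases "P = 0")
    case True
    then show ?thesis using sf pq by (intro rational_functionsI[of k 0 1]) (simp_all add: poly_over_1)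
  next
    case False
    then show ?thesis using pq by (auto intro: rational_functionsI[of k Q P])
  qed
qed

lemma poly_in_rational_functions:
  "is_subfield k \<Longrightarrow> poly_over k P \<Longrightarrow> poly P z \<in> rational_functions k z"
  by (rule rational_functionsI[of k P 1]) (simp_all add: poly_over_1)

lemma subfield_subset_rational_functions: "is_subfield k \<Longrightarrow> k \<subseteq> rational_functions k z"
  using poly_in_rational_functions[of k "[:c:]" z for c] poly_over_const by fastforce

lemma generator_in_rational_functions: "is_subfield k \<Longrightarrow> z \<in> rational_functions k z"
  using poly_in_rational_functions[of k "[:0, 1:]" z] poly_over_X by fastforce

lemma Aut_fixes_rational_functions:
  "g \<in> Aut k \<Longrightarrow> g z = z \<Longrightarrow> a \<in> rational_functions k z \<Longrightarrow> g a = a"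
  unfolding rational_functions_def by (auto simp: Aut_divide Aut_poly)

lemma rational_functions_UNIV:
  assumes "is_subfield k" "transcendental_over k z" "field_gen k {z} = UNIV"
  shows "rational_functions k z = UNIV"
  using field_gen_UNIV_imp_subfield_UNIV[OF assms(3) rational_functions_subfield[OF assms(1,2)]]
    subfield_subset_rational_functions[OF assms(1)] generator_in_rational_functions[OF assms(1)]
  by blast

section \<open>Eigenvectors of a superelliptic automorphism\<close>

lemma Aut_action_on_expansion:
  assumes "g \<in> Aut k" "g x = x" "g y = c * y" "\<And>i. a i \<in> rational_functions k x"
  shows "g (\<Sum>i<n. a i * y ^ i) = (\<Sum>i<n. a i * c ^ i * y ^ i)"
  using assms
  by (simp add: Aut_sum AutD(3) Aut_power Aut_fixes_rational_functions power_mult_distrib mult.assoc)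

locale superelliptic_automorphism =
  fixes k :: "'a::field set" and n :: nat and x y :: 'a and F :: "'a poly"
    and \<xi> :: 'a and s :: "'a \<Rightarrow> 'a"
  assumes subfield: "is_subfield k"
    and model: "superelliptic_model k n x y F"
    and root_in_subfield: "\<xi> \<in> k" and primitive: "primitive_root n \<xi>"
    and Aut: "s \<in> Aut k" and fixes_x: "s x = x" and scales_y: "s y = \<xi> * y"
begin

lemma n_ge_2: "n \<ge> 2"
  and x_transcendental: "transcendental_over k x"
  and generates: "field_gen k {x, y} = UNIV"
  and F_over: "poly_over k F"
  and y_power_n: "y ^ n = poly F x"
  using model unfolding superelliptic_model_def by auto

lemma root_power_n: "\<xi> ^ n = 1"
  using primitive unfolding primitive_root_def by simp

lemma y_nonzero: "y \<noteq> 0"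
proof
  assume "y = 0"
  then have "poly F x = 0" using y_power_n n_ge_2 by (simp add: power_0_left)
  moreover have "F \<noteq> 0" using model unfolding superelliptic_model_def by auto
  ultimately show False using transcendental_poly_nonzero[OF x_transcendental F_over] by blast
qed

lemma funpow_fixes_x: "(s ^^ l) x = x"
  by (induction l) (auto simp: fixes_x)

lemma funpow_scales_y: "(s ^^ l) y = \<xi> ^ l * y"
  by (rule Aut_funpow_scale[OF Aut subfield root_in_subfield scales_y])

abbreviation "Kx \<equiv> rational_functions k x"

lemma Kx_subfield: "is_subfield Kx"
  by (rule rational_functions_subfield[OF subfield x_transcendental])

definition y_expansions :: "'a set" where
  "y_expansions = {\<Sum>i<n. a i * y ^ i | a. \<forall>i. a i \<in> Kx}"

lemma y_expansionsI: "(\<And>i. a i \<in> Kx) \<Longrightarrow> (\<Sum>i<n. a i * y ^ i) \<in> y_expansions"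
  unfolding y_expansions_def by blast

lemma y_expansionsE:
  assumes "z \<in> y_expansions"
  obtains a where "\<And>i. a i \<in> Kx" "z = (\<Sum>i<n. a i * y ^ i)"
  using assms unfolding y_expansions_def by blast

lemma monomial_in_y_expansions:
  assumes "c \<in> Kx"
  shows "c * y ^ j \<in> y_expansions"
proof -
  define C where "C = c * poly F x ^ (j div n)"
  have "C \<in> Kx"
    unfolding C_def using assms Kx_subfield poly_in_rational_functions[OF subfield F_over]
    by (auto intro: subfieldD subfield_power)
  then have "(\<Sum>i<n. (if i = j mod n then C else 0) * y ^ i) \<in> y_expansions"
    using subfieldD(1)[OF Kx_subfield] by (intro y_expansionsI) auto
  moreover have "(\<Sum>i<n. (if i = j mod n then C else 0) * y ^ i) = C * y ^ (j mod n)"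
    using n_ge_2 by (simp add: if_distrib[of "\<lambda>a. a * _"] cong: if_cong)
  moreover have "y ^ j = poly F x ^ (j div n) * y ^ (j mod n)"
  proof -
    have "y ^ j = y ^ (n * (j div n) + j mod n)" by simp
    also have "\<dots> = (y ^ n) ^ (j div n) * y ^ (j mod n)" by (simp only: power_add power_mult)
    finally show ?thesis using y_power_n by simp
  qed
  ultimately show ?thesis unfolding C_def by (simp add: mult.assoc)
qed

lemma y_expansions_zero: "0 \<in> y_expansions"
  using monomial_in_y_expansions[of 0 0] subfieldD(1)[OF Kx_subfield] by simp

lemma y_expansions_one: "1 \<in> y_expansions"
  using monomial_in_y_expansions[of 1 0] subfieldD(2)[OF Kx_subfield] by simp

lemma y_expansions_add:
  assumes "z1 \<in> y_expansions" "z2 \<in> y_expansions"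
  shows "z1 + z2 \<in> y_expansions"
proof -
  obtain a where "\<And>i. a i \<in> Kx" "z1 = (\<Sum>i<n. a i * y ^ i)"
    using y_expansionsE[OF assms(1)] by blast
  moreover obtain b where "\<And>i. b i \<in> Kx" "z2 = (\<Sum>i<n. b i * y ^ i)"
    using y_expansionsE[OF assms(2)] by blast
  ultimately have "z1 + z2 = (\<Sum>i<n. (a i + b i) * y ^ i)"
    by (simp add: sum.distrib distrib_right)
  also have "\<dots> \<in> y_expansions"
    by (rule y_expansionsI) (simp add: subfieldD(3)[OF Kx_subfield] \<open>\<And>i. a i \<in> Kx\<close> \<open>\<And>i. b i \<in> Kx\<close>)
  finally show ?thesis .
qed

lemma y_expansions_uminus:
  assumes "z \<in> y_expansions"
  shows "- z \<in> y_expansions"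
proof -
  obtain a where "\<And>i. a i \<in> Kx" "z = (\<Sum>i<n. a i * y ^ i)"
    using y_expansionsE[OF assms] by blast
  then have "- z = (\<Sum>i<n. (- a i) * y ^ i)" by (simp add: sum_negf)
  also have "\<dots> \<in> y_expansions"
    by (rule y_expansionsI) (simp add: subfield_uminus[OF Kx_subfield] \<open>\<And>i. a i \<in> Kx\<close>)
  finally show ?thesis .
qed

lemma y_expansions_sum: "(\<And>i. i \<in> A \<Longrightarrow> f i \<in> y_expansions) \<Longrightarrow> sum f A \<in> y_expansions"
  by (induction A rule: infinite_finite_induct) (auto intro: y_expansions_add y_expansions_zero)

lemma y_expansions_mult:
  assumes "z1 \<in> y_expansions" "z2 \<in> y_expansions"
  shows "z1 * z2 \<in> y_expansions"
proof -
  obtain a where a: "\<And>i. a i \<in> Kx" "z1 = (\<Sum>i<n. a i * y ^ i)"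
    using y_expansionsE[OF assms(1)] by blast
  obtain b where b: "\<And>i. b i \<in> Kx" "z2 = (\<Sum>i<n. b i * y ^ i)"
    using y_expansionsE[OF assms(2)] by blast
  have "z1 * z2 = (\<Sum>i<n. \<Sum>j<n. (a i * b j) * y ^ (i + j))"
    unfolding a(2) b(2) sum_product by (simp add: power_add algebra_simps)
  also have "\<dots> \<in> y_expansions"
    using a(1) b(1) by (intro y_expansions_sum monomial_in_y_expansions subfieldD(5)[OF Kx_subfield])
  finally show ?thesis .
qed

lemma y_expansions_prod: "(\<And>i. i \<in> A \<Longrightarrow> f i \<in> y_expansions) \<Longrightarrow> prod f A \<in> y_expansions"
  by (induction A rule: infinite_finite_induct) (auto intro: y_expansions_mult y_expansions_one)

lemma funpow_on_expansion:
  "(\<And>i. a i \<in> Kx) \<Longrightarrow> (s ^^ l) (\<Sum>i<n. a i * y ^ i) = (\<Sum>i<n. a i * (\<xi> ^ l) ^ i * y ^ i)"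
  by (rule Aut_action_on_expansion[OF Aut_funpow[OF Aut] funpow_fixes_x funpow_scales_y])

lemma funpow_y_expansions:
  assumes "z \<in> y_expansions"
  shows "(s ^^ l) z \<in> y_expansions"
proof -
  obtain a where a: "\<And>i. a i \<in> Kx" "z = (\<Sum>i<n. a i * y ^ i)"
    using y_expansionsE[OF assms] by blast
  have "\<xi> \<in> Kx"
    using subfield_subset_rational_functions[OF subfield] root_in_subfield by blast
  then have "a i * (\<xi> ^ l) ^ i \<in> Kx" for i
    using a(1) by (intro subfieldD(5)[OF Kx_subfield] subfield_power[OF Kx_subfield])
  then show ?thesis unfolding a(2) funpow_on_expansion[OF a(1)] by (rule y_expansionsI)
qed

lemma funpow_n_on_y_expansions: "z \<in> y_expansions \<Longrightarrow> (s ^^ n) z = z"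
  by (auto elim!: y_expansionsE simp: funpow_on_expansion root_power_n)

text \<open>Averaging \<open>\<xi>\<^sup>-\<^sup>m\<^sup>l (s\<^sup>l z)\<close> over \<open>l < n\<close> projects an expansion onto its \<open>y\<^sup>m\<close>-component.\<close>

lemma eigen_projection:
  assumes a: "\<And>i. a i \<in> Kx" and m: "m < n"
  shows "(\<Sum>l<n. \<xi> ^ ((n - m) * l) * (s ^^ l) (\<Sum>i<n. a i * y ^ i)) = of_nat n * (a m * y ^ m)"
proof -
  have "(\<Sum>l<n. \<xi> ^ ((n - m) * l) * (s ^^ l) (\<Sum>i<n. a i * y ^ i))
      = (\<Sum>l<n. \<Sum>i<n. a i * y ^ i * (\<xi> ^ (i + n - m)) ^ l)"
  proof (intro sum.cong refl)
    fix l
    have "(\<xi> ^ (i + n - m)) ^ l = \<xi> ^ ((n - m) * l) * (\<xi> ^ l) ^ i" for i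
      using m by (simp add: power_mult[symmetric] power_add[symmetric] algebra_simps)
    then show "\<xi> ^ ((n - m) * l) * (s ^^ l) (\<Sum>i<n. a i * y ^ i)
        = (\<Sum>i<n. a i * y ^ i * (\<xi> ^ (i + n - m)) ^ l)"
      by (simp add: funpow_on_expansion[OF a] sum_distrib_left mult_ac)
  qed
  also have "\<dots> = (\<Sum>i<n. a i * y ^ i * (\<Sum>l<n. (\<xi> ^ (i + n - m)) ^ l))"
    by (subst sum.swap) (simp add: sum_distrib_left)
  also have "\<dots> = (\<Sum>i<n. if i = m then of_nat n * (a m * y ^ m) else 0)"
  proof (intro sum.cong refl)
    fix i assume "i \<in> {..<n}"
    then have "n dvd (i + n - m) \<longleftrightarrow> i = m"
      using dvd_shifted_difference_iff[OF _ m] by simp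
    then show "a i * y ^ i * (\<Sum>l<n. (\<xi> ^ (i + n - m)) ^ l) = (if i = m then of_nat n * (a m * y ^ m) else 0)"
      using primitive_root_geometric_sum[OF primitive] n_ge_2 by simp
  qed
  also have "\<dots> = of_nat n * (a m * y ^ m)" using m by simp
  finally show ?thesis .
qed

lemma eigenvector_in_y_expansions:
  assumes z: "z \<in> y_expansions" and m: "m < n" and eigen: "s z = \<xi> ^ m * z"
  shows "\<exists>a\<in>Kx. z = a * y ^ m"
proof -
  obtain a where a: "\<And>i. a i \<in> Kx" "z = (\<Sum>i<n. a i * y ^ i)"
    using y_expansionsE[OF z] by blast
  have iterate: "(s ^^ l) z = \<xi> ^ (m * l) * z" for l
  proof (induction l)
    case (Suc l)
    have "\<xi> ^ (m * l) \<in> k" using root_in_subfield subfield subfield_power by blast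
    then show ?case using Suc eigen by (simp add: AutD(3,5)[OF Aut] power_add algebra_simps)
  qed simp
  have "\<xi> ^ ((n - m) * l) * (s ^^ l) z = z" for l
  proof -
    have "\<xi> ^ ((n - m) * l) * \<xi> ^ (m * l) = (\<xi> ^ n) ^ l"
      using m by (simp add: power_add[symmetric] power_mult[symmetric] algebra_simps)
    then show ?thesis using iterate root_power_n by simp
  qed
  then have "of_nat n * z = of_nat n * (a m * y ^ m)"
    using eigen_projection[of a, OF a(1) m] unfolding a(2)[symmetric] by simp
  then have "z = a m * y ^ m"
    using primitive_root_of_nat_nonzero[OF primitive] n_ge_2 by simp
  then show ?thesis using a(1) by blast
qed

text \<open>An inverse is reached through the norm \<open>N = \<Prod>\<^sub>l\<^sub><\<^sub>n s\<^sup>l z\<close>: it is \<open>s\<close>-invariant, hence lies in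
  \<open>k(x)\<close>, and \<open>z\<^sup>-\<^sup>1 = (\<Prod>\<^sub>0\<^sub><\<^sub>l\<^sub><\<^sub>n s\<^sup>l z) / N\<close>.\<close>

lemma y_expansions_inverse:
  assumes z: "z \<in> y_expansions"
  shows "inverse z \<in> y_expansions"
proof (cases "z = 0")
  case True
  then show ?thesis using y_expansions_zero by simp
next
  case False
  obtain n' where n': "n = Suc n'" using n_ge_2 by (cases n) auto
  define M where "M = (\<Prod>l<n'. (s ^^ Suc l) z)"
  define N where "N = z * M"
  have M: "M \<in> y_expansions"
    unfolding M_def using funpow_y_expansions[OF z] by (intro y_expansions_prod)
  have N: "N = (\<Prod>l<n. (s ^^ l) z)"
    unfolding N_def M_def n' by (subst prod.lessThan_Suc_shift) simp
  have "s N = (\<Prod>l<n. (s ^^ Suc l) z)" unfolding N by (simp add: Aut_prod[OF Aut])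
  also have "\<dots> = M * (s ^^ n) z" unfolding M_def n' by simp
  also have "\<dots> = N" using funpow_n_on_y_expansions[OF z] unfolding N_def by simp
  finally have "s N = \<xi> ^ 0 * N" by simp
  then obtain c where "c \<in> Kx" "N = c * y ^ 0"
    using eigenvector_in_y_expansions[OF _ _] n_ge_2 y_expansions_mult[OF z M]
    unfolding N_def by fastforce
  then have "inverse N \<in> y_expansions"
    using monomial_in_y_expansions[of "inverse N" 0] subfieldD(6)[OF Kx_subfield] by simp
  moreover have "M \<noteq> 0"
    unfolding M_def using False Aut_eq_0_iff[OF Aut] Aut_eq_0_iff[OF Aut_funpow[OF Aut]] by simp
  then have "inverse z = M * inverse N" unfolding N_def using False by (simp add: field_simps)
  ultimately show ?thesis using y_expansions_mult[OF M] by simp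
qed

lemma y_expansions_UNIV: "y_expansions = UNIV"
proof (rule field_gen_UNIV_imp_subfield_UNIV[OF generates])
  show "is_subfield y_expansions"
    unfolding is_subfield_def
    by (auto simp: y_expansions_zero y_expansions_one y_expansions_add y_expansions_mult
        y_expansions_inverse y_expansions_add[OF _ y_expansions_uminus, simplified])
  have "c \<in> y_expansions" if "c \<in> Kx" for c
    using monomial_in_y_expansions[OF that, of 0] by simp
  moreover have "y \<in> y_expansions"
    using monomial_in_y_expansions[of 1 1] subfieldD(2)[OF Kx_subfield] by simp
  ultimately show "k \<union> {x, y} \<subseteq> y_expansions"
    using subfield_subset_rational_functions[OF subfield] generator_in_rational_functions[OF subfield]
    by blast
qed

lemma eigenvector_form:
  assumes "m < n" "s z = \<xi> ^ m * z"
  obtains A B where "poly_over k A" "poly_over k B" "B \<noteq> 0" "z = poly A x / poly B x * y ^ m"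
  using eigenvector_in_y_expansions[OF _ assms] y_expansions_UNIV unfolding rational_functions_def
  by blast

end

section \<open>Orders of vanishing under a Moebius transformation\<close>

definition homogenize :: "'a::field poly \<Rightarrow> 'a poly \<Rightarrow> 'a poly \<Rightarrow> nat \<Rightarrow> 'a poly" where
  "homogenize G P Q e = (\<Sum>i\<le>e. smult (coeff G i) (P ^ i * Q ^ (e - i)))"

lemma poly_over_homogenize:
  "is_subfield k \<Longrightarrow> poly_over k G \<Longrightarrow> poly_over k P \<Longrightarrow> poly_over k Q \<Longrightarrow>
    poly_over k (homogenize G P Q e)"
  unfolding homogenize_def
  by (intro poly_over_sum poly_over_smult poly_over_mult poly_over_power poly_over_coeff)

lemma poly_homogenize:
  assumes "degree G \<le> e" "poly Q z \<noteq> 0"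
  shows "poly (homogenize G P Q e) z = poly Q z ^ e * poly G (poly P z / poly Q z)"
proof -
  have "poly (homogenize G P Q e) z = (\<Sum>i\<le>e. poly Q z ^ e * (coeff G i * (poly P z / poly Q z) ^ i))"
    unfolding homogenize_def poly_sum
  proof (intro sum.cong refl)
    fix i assume "i \<in> {..e}"
    then have "poly Q z ^ e = poly Q z ^ i * poly Q z ^ (e - i)"
      by (simp add: power_add[symmetric])
    then show "poly (smult (coeff G i) (P ^ i * Q ^ (e - i))) z
        = poly Q z ^ e * (coeff G i * (poly P z / poly Q z) ^ i)"
      using assms(2) by (simp add: power_divide field_simps)
  qed
  also have "\<dots> = poly Q z ^ e * (\<Sum>i\<le>e. coeff G i * (poly P z / poly Q z) ^ i)"
    by (simp add: sum_distrib_left)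
  also have "(\<Sum>i\<le>e. coeff G i * (poly P z / poly Q z) ^ i) = poly G (poly P z / poly Q z)"
    unfolding poly_altdef using assms(1)
    by (intro sum.mono_neutral_right) (auto simp: coeff_eq_0)
  finally show ?thesis .
qed

lemma poly_homogenize_at_root_of_denominator:
  assumes "poly Q r = 0"
  shows "poly (homogenize G P Q e) r = coeff G e * poly P r ^ e"
proof -
  have "poly (homogenize G P Q e) r = (\<Sum>i\<le>e. if i = e then coeff G e * poly P r ^ e else 0)"
    unfolding homogenize_def poly_sum by (intro sum.cong refl) (auto simp: assms)
  then show ?thesis by simp
qed

lemma homogenize_diff_smult:
  "homogenize (G1 - smult r G2) P Q e = homogenize G1 P Q e - smult r (homogenize G2 P Q e)"
proof -
  have "smult r (\<Sum>i\<le>m. f i) = (\<Sum>i\<le>m. smult r (f i))" for f :: "nat \<Rightarrow> 'a poly" and m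
    by (induction m) (simp_all add: smult_add_right)
  then show ?thesis unfolding homogenize_def by (simp add: smult_diff_left sum_subtractf)
qed

lemma homogenize_linear_factor:
  assumes sf: "is_subfield k" and tx: "transcendental_over k x"
    and G: "poly_over k G" and P: "poly_over k P" and Q: "poly_over k Q" "Q \<noteq> 0" and t: "t \<in> k"
    and e: "e \<ge> 1" "degree G \<le> e - 1"
  shows "homogenize ([:- t, 1:] * G) P Q e = (P - smult t Q) * homogenize G P Q (e - 1)"
proof (rule transcendental_poly_eq[OF tx sf])
  have q: "poly Q x \<noteq> 0" using tx Q transcendental_poly_nonzero by blast
  have deg: "degree ([:- t, 1:] * G) \<le> e"
    using e degree_mult_le[of "[:- t, 1:]" G] by simp
  show "poly_over k (homogenize ([:- t, 1:] * G) P Q e)"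
    using sf G P Q t by (intro poly_over_homogenize poly_over_mult poly_over_linear)
  show "poly_over k ((P - smult t Q) * homogenize G P Q (e - 1))"
    using sf G P Q t by (intro poly_over_homogenize poly_over_mult poly_over_diff poly_over_smult)
  have "poly Q x ^ e = poly Q x * poly Q x ^ (e - 1)" using e by (cases e) auto
  moreover have "poly Q x * (poly P x / poly Q x - t) = poly P x - t * poly Q x"
    using q by (simp add: field_simps)
  ultimately show "poly (homogenize ([:- t, 1:] * G) P Q e) x
      = poly ((P - smult t Q) * homogenize G P Q (e - 1)) x"
    unfolding poly_homogenize[OF deg q] poly_mult poly_homogenize[OF e(2) q]
    by (simp add: algebra_simps q)
qed

lemma reduced_fraction:
  assumes sf: "is_subfield k" and w: "w \<notin> k"
    and P0: "poly_over k P0" and Q0: "poly_over k Q0" "poly Q0 w \<noteq> 0"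
  obtains P Q where "poly_over k P" "poly_over k Q" "poly Q w \<noteq> 0"
    "poly P0 w / poly Q0 w = poly P w / poly Q w"
    "\<And>r. r \<in> k \<Longrightarrow> poly P r = 0 \<Longrightarrow> poly Q r \<noteq> 0"
proof -
  define rep where "rep = (\<lambda>(P, Q). poly_over k P \<and> poly_over k Q \<and> poly Q w \<noteq> 0 \<and>
    poly P0 w / poly Q0 w = poly P w / poly Q w)"
  obtain P Q where PQ: "rep (P, Q)" and least: "\<And>P' Q'. rep (P', Q') \<Longrightarrow> degree Q \<le> degree Q'"
    using ex_has_least_nat[of rep "(P0, Q0)" "\<lambda>(P, Q). degree Q"] P0 Q0
    unfolding rep_def by fastforce
  have "poly Q r \<noteq> 0" if r: "r \<in> k" "poly P r = 0" for r
  proof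
    assume "poly Q r = 0"
    then obtain Q1 where Q1: "poly_over k Q1" "Q = [:- r, 1:] * Q1"
      using poly_over_root_factor[OF sf _ r(1)] PQ unfolding rep_def by auto
    obtain P1 where P1: "poly_over k P1" "P = [:- r, 1:] * P1"
      using poly_over_root_factor[OF sf _ r] PQ unfolding rep_def by auto
    have "w - r \<noteq> 0" using w r(1) by auto
    then have "poly P w / poly Q w = poly P1 w / poly Q1 w"
      unfolding P1(2) Q1(2) poly_mult by (simp add: mult_divide_mult_cancel_left)
    then have "rep (P1, Q1)" using PQ P1 Q1 unfolding rep_def by auto
    moreover have "Q1 \<noteq> 0" using PQ Q1(2) unfolding rep_def by auto
    then have "degree Q = Suc (degree Q1)" unfolding Q1(2) by (subst degree_mult_eq) auto
    ultimately show False using least by fastforce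
  qed
  then show ?thesis using that PQ unfolding rep_def by auto
qed

lemma order_power: "p \<noteq> 0 \<Longrightarrow> order a (p ^ m) = m * order a p"
  by (induction m) (auto simp: order_mult)

lemma order_linear_factor_mult:
  assumes "[:- t, 1:] * G \<noteq> 0"
  shows "order t ([:- t, 1:] * G) = Suc (order t G)"
  using order_mult[OF assms] order_power_n_n[of t 1] by simp

text \<open>The assumptions say \<open>k(x) = k(v)\<close>, so \<open>x \<mapsto> v\<close> is a Moebius transformation: its pole is
  unique and its fibres are simple.\<close>

locale mutually_rational =
  fixes k :: "'a::field set" and x v :: 'a and P Q C D :: "'a poly"
  assumes subfield: "is_subfield k"
    and x_transcendental: "transcendental_over k x" and v_not_in_subfield: "v \<notin> k"
    and P: "poly_over k P" and Q: "poly_over k Q" "poly Q x \<noteq> 0"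
    and v_eq: "v = poly P x / poly Q x"
    and PQ_coprime: "\<And>r. r \<in> k \<Longrightarrow> poly P r = 0 \<Longrightarrow> poly Q r \<noteq> 0"
    and C: "poly_over k C" and D: "poly_over k D" "poly D v \<noteq> 0"
    and x_eq: "x = poly C v / poly D v"
    and CD_coprime: "\<And>t. t \<in> k \<Longrightarrow> poly C t = 0 \<Longrightarrow> poly D t \<noteq> 0"
begin

definition e :: nat where "e = max (degree C) (degree D)"

lemma degree_C_le: "degree C \<le> e" and degree_D_le: "degree D \<le> e"
  unfolding e_def by auto

lemma Q_nonzero: "Q \<noteq> 0"
  using Q by auto

lemma e_ge_1: "e \<ge> 1"
proof (rule ccontr)
  assume "\<not> e \<ge> 1"
  then have "degree C = 0" "degree D = 0" unfolding e_def by auto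
  then have "x = coeff C 0 / coeff D 0" using x_eq by (simp add: poly_altdef)
  then have "x \<in> k" using C D subfield by (simp add: poly_over_coeff subfield_divide)
  then show False using transcendental_not_in[OF x_transcendental subfield] by simp
qed

lemma homogenize_identity: "[:0, 1:] * homogenize D P Q e = homogenize C P Q e"
proof (rule transcendental_poly_eq[OF x_transcendental subfield])
  show "poly_over k ([:0, 1:] * homogenize D P Q e)"
    using subfield P Q D by (intro poly_over_mult poly_over_X poly_over_homogenize)
  show "poly_over k (homogenize C P Q e)"
    using subfield P Q C by (intro poly_over_homogenize)
  have "poly ([:0, 1:] * homogenize D P Q e) x = x * (poly Q x ^ e * poly D v)"
    using poly_homogenize[OF degree_D_le Q(2)] v_eq by simp
  also have "\<dots> = poly Q x ^ e * poly C v" using D(2) x_eq by (simp add: field_simps)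
  also have "\<dots> = poly (homogenize C P Q e) x"
    using poly_homogenize[OF degree_C_le Q(2)] v_eq by simp
  finally show "poly ([:0, 1:] * homogenize D P Q e) x = poly (homogenize C P Q e) x" .
qed

lemma denominator_root_unique:
  assumes "r1 \<in> k" "poly Q r1 = 0" "r2 \<in> k" "poly Q r2 = 0"
  shows "r1 = r2"
proof -
  have pole: "r * coeff D e = coeff C e" if r: "r \<in> k" "poly Q r = 0" for r
  proof -
    have "r * (coeff D e * poly P r ^ e) = coeff C e * poly P r ^ e"
      using arg_cong[OF homogenize_identity, of "\<lambda>p. poly p r"]
      by (simp add: poly_homogenize_at_root_of_denominator[OF r(2)])
    moreover have "poly P r ^ e \<noteq> 0" using PQ_coprime r by auto
    ultimately show ?thesis by (metis mult.assoc mult_right_cancel)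
  qed
  have "coeff C e \<noteq> 0 \<or> coeff D e \<noteq> 0"
    unfolding e_def using D(2) by (cases "degree C \<le> degree D") (auto simp: max_def)
  then show ?thesis using pole[OF assms(1,2)] pole[OF assms(3,4)]
    by (metis mult_cancel_right mult_zero_left)
qed

lemma fibre_factorization:
  assumes r: "r \<in> k" "poly Q r \<noteq> 0"
  defines "t \<equiv> poly P r / poly Q r"
  obtains H where "poly (homogenize D P Q e) r \<noteq> 0"
    "[:- r, 1:] * homogenize D P Q e = (P - smult t Q) * H"
proof -
  have t: "t \<in> k" unfolding t_def using subfield P Q r by (intro subfield_divide poly_in_subfield)
  have hom_D: "poly (homogenize D P Q e) r = poly Q r ^ e * poly D t"
    unfolding t_def by (rule poly_homogenize[OF degree_D_le r(2)])
  have Ct: "poly C t = r * poly D t"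
    using arg_cong[OF homogenize_identity, of "\<lambda>p. poly p r"] hom_D r(2)
      poly_homogenize[OF degree_C_le r(2)] unfolding t_def by simp
  then have "poly D t \<noteq> 0" using CD_coprime[OF t] by auto
  then have nonzero: "poly (homogenize D P Q e) r \<noteq> 0" using hom_D r(2) by simp
  have "poly (C - smult r D) t = 0" using Ct by simp
  then obtain G where G: "poly_over k G" "C - smult r D = [:- t, 1:] * G"
    using poly_over_root_factor[OF subfield _ t] subfield C D r(1)
    by (metis poly_over_diff poly_over_smult)
  have "degree ([:- t, 1:] * G) \<le> e"
    unfolding G(2)[symmetric] using degree_C_le degree_D_le
    by (meson degree_diff_le degree_smult_le order_trans)
  then have deg_G: "degree G \<le> e - 1"
  proof (cases "G = 0")
    case False
    then have "degree ([:- t, 1:] * G) = Suc (degree G)" by (subst degree_mult_eq) auto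
    then show ?thesis using \<open>degree ([:- t, 1:] * G) \<le> e\<close> by simp
  qed simp
  have "[:- r, 1:] * homogenize D P Q e = [:0, 1:] * homogenize D P Q e - smult r (homogenize D P Q e)"
    by simp
  also have "\<dots> = homogenize (C - smult r D) P Q e"
    unfolding homogenize_diff_smult homogenize_identity ..
  also have "\<dots> = (P - smult t Q) * homogenize G P Q (e - 1)"
    unfolding G(2)
    using homogenize_linear_factor[OF subfield x_transcendental G(1) P Q(1) Q_nonzero t e_ge_1 deg_G] .
  finally show ?thesis using that nonzero by blast
qed

lemma fibre_order_eq_1:
  assumes r: "r \<in> k" "poly Q r \<noteq> 0"
  defines "t \<equiv> poly P r / poly Q r"
  shows "P - smult t Q \<noteq> 0" "order r (P - smult t Q) = 1"
proof -
  have t: "t \<in> k" unfolding t_def using subfield P Q r by (intro subfield_divide poly_in_subfield)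
  show nonzero: "P - smult t Q \<noteq> 0"
  proof
    assume "P - smult t Q = 0"
    then have "v = t" using v_eq Q(2) by simp
    then show False using v_not_in_subfield t by simp
  qed
  obtain H where H: "poly (homogenize D P Q e) r \<noteq> 0"
    and factored: "[:- r, 1:] * homogenize D P Q e = (P - smult t Q) * H"
    using fibre_factorization[OF r] unfolding t_def by blast
  have "homogenize D P Q e \<noteq> 0" using H by auto
  then have "[:- r, 1:] * homogenize D P Q e \<noteq> 0" by (simp only: mult_eq_0_iff) simp
  then have "order r ([:- r, 1:] * homogenize D P Q e) = Suc (order r (homogenize D P Q e))"
    by (rule order_linear_factor_mult)
  then have "order r ([:- r, 1:] * homogenize D P Q e) = 1" using order_0I[OF H] by simp
  moreover have "(P - smult t Q) * H \<noteq> 0"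
    using \<open>[:- r, 1:] * homogenize D P Q e \<noteq> 0\<close> unfolding factored .
  ultimately have "order r (P - smult t Q) + order r H = 1"
    unfolding factored by (simp add: order_mult)
  moreover have "poly (P - smult t Q) r = 0" unfolding t_def using r(2) by simp
  then have "order r (P - smult t Q) \<noteq> 0" using order_root nonzero by blast
  ultimately show "order r (P - smult t Q) = 1" by simp
qed

end

lemma rsquarefree_cofactor_nonzero:
  assumes "rsquarefree F" "F = [:- t, 1:] * G"
  shows "poly G t \<noteq> 0"
proof
  assume "poly G t = 0"
  have "F \<noteq> 0" using assms(1) unfolding rsquarefree_def by simp
  then have "order t F = Suc (order t G)" "G \<noteq> 0"
    using order_linear_factor_mult assms(2) by auto
  moreover have "order t G \<noteq> 0" using \<open>poly G t = 0\<close> \<open>G \<noteq> 0\<close> order_root by blast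
  moreover have "order t F = 0 \<or> order t F = 1" using assms(1) unfolding rsquarefree_def by blast
  ultimately show False by linarith
qed

lemma rsquarefree_two_roots:
  assumes ac: "alg_closed_subfield k" and F: "poly_over k F" "rsquarefree F" "degree F \<ge> 2"
  obtains r1 r2 where "r1 \<in> k" "r2 \<in> k" "r1 \<noteq> r2" "poly F r1 = 0" "poly F r2 = 0"
proof -
  have sf: "is_subfield k" using ac by (rule alg_closed_subfield_is_subfield)
  obtain r1 where r1: "r1 \<in> k" "poly F r1 = 0"
    using ac F unfolding alg_closed_subfield_def by auto
  then obtain G where G: "poly_over k G" "F = [:- r1, 1:] * G"
    using poly_over_root_factor[OF sf F(1)] by blast
  have "G \<noteq> 0" using F(2) G(2) unfolding rsquarefree_def by auto
  then have "degree F = Suc (degree G)" unfolding G(2) by (subst degree_mult_eq) auto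
  then have "degree G > 0" using F(3) by simp
  then obtain r2 where "r2 \<in> k" "poly G r2 = 0"
    using ac G(1) unfolding alg_closed_subfield_def by auto
  moreover have "r1 \<noteq> r2" using rsquarefree_cofactor_nonzero[OF F(2) G(2)] calculation by auto
  ultimately show ?thesis using that r1 G(2) by simp
qed

lemma order_homogenize_le_1:
  assumes sf: "is_subfield k" and tx: "transcendental_over k x"
    and F: "poly_over k F" "rsquarefree F" "degree F \<ge> 1"
    and P: "poly_over k P" and Q: "poly_over k Q" "Q \<noteq> 0"
    and r: "r \<in> k" "poly Q r \<noteq> 0"
    and fibre: "P - smult (poly P r / poly Q r) Q \<noteq> 0" "order r (P - smult (poly P r / poly Q r) Q) = 1"
  shows "homogenize F P Q (degree F) \<noteq> 0 \<and> order r (homogenize F P Q (degree F)) \<le> 1"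
proof -
  define t where "t = poly P r / poly Q r"
  have t: "t \<in> k" unfolding t_def using sf P Q r by (intro subfield_divide poly_in_subfield)
  have hom: "poly (homogenize F P Q (degree F)) r = poly Q r ^ degree F * poly F t"
    unfolding t_def by (rule poly_homogenize[OF order_refl r(2)])
  show ?thesis
  proof (cases "poly F t = 0")
    case False
    then have "poly (homogenize F P Q (degree F)) r \<noteq> 0" using hom r(2) by simp
    then show ?thesis using order_0I by fastforce
  next
    case True
    then obtain G where G: "poly_over k G" "F = [:- t, 1:] * G"
      using poly_over_root_factor[OF sf F(1) t] by blast
    have Gt: "poly G t \<noteq> 0" by (rule rsquarefree_cofactor_nonzero[OF F(2) G(2)])
    have "G \<noteq> 0" using Gt by auto
    then have deg: "degree F = Suc (degree G)" unfolding G(2) by (subst degree_mult_eq) auto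
    have factored: "homogenize F P Q (degree F) = (P - smult t Q) * homogenize G P Q (degree G)"
      using homogenize_linear_factor[OF sf tx G(1) P Q t, of "degree F"] deg G(2) by simp
    have "poly (homogenize G P Q (degree G)) r = poly Q r ^ degree G * poly G t"
      unfolding t_def by (rule poly_homogenize[OF order_refl r(2)])
    then have "poly (homogenize G P Q (degree G)) r \<noteq> 0" using Gt r(2) by simp
    then have "homogenize G P Q (degree G) \<noteq> 0" "order r (homogenize G P Q (degree G)) = 0"
      by (auto intro: order_0I)
    then show ?thesis unfolding factored using fibre unfolding t_def by (simp add: order_mult)
  qed
qed

lemma remainder_le_1_of_mult_add_eq:
  fixes a b h m n :: nat
  assumes "n * a + m = n * b + h" "h \<le> 1" "m < n"
  shows "m \<le> 1"
proof (cases "b \<le> a")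
  case True
  then have "n * b \<le> n * a" by simp
  then show ?thesis using assms by linarith
next
  case False
  then have "n * (a + 1) \<le> n * b" by (intro mult_le_mono2) simp
  then show ?thesis using assms by (simp add: algebra_simps)
qed

lemma mutually_rational_exists:
  assumes ac: "alg_closed_subfield k" and tx: "transcendental_over k x"
    and v: "v \<in> rational_functions k x" "v \<notin> k" and x: "x \<in> rational_functions k v"
  obtains P Q C D where "mutually_rational k x v P Q C D"
proof -
  have sf: "is_subfield k" using ac by (rule alg_closed_subfield_is_subfield)
  have tv: "transcendental_over k v" using alg_closed_transcendental_iff[OF ac] v(2) by simp
  obtain P0 Q0 where P0Q0: "poly_over k P0" "poly_over k Q0" "Q0 \<noteq> 0" "v = poly P0 x / poly Q0 x"
    using v(1) by (rule rational_functionsE)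
  obtain P Q where PQ: "poly_over k P" "poly_over k Q" "poly Q x \<noteq> 0"
    "poly P0 x / poly Q0 x = poly P x / poly Q x" "\<And>r. r \<in> k \<Longrightarrow> poly P r = 0 \<Longrightarrow> poly Q r \<noteq> 0"
    using reduced_fraction[OF sf transcendental_not_in[OF tx sf] P0Q0(1,2)
        transcendental_poly_nonzero[OF tx P0Q0(2,3)]]
    by blast
  obtain C0 D0 where C0D0: "poly_over k C0" "poly_over k D0" "D0 \<noteq> 0" "x = poly C0 v / poly D0 v"
    using x by (rule rational_functionsE)
  obtain C D where CD: "poly_over k C" "poly_over k D" "poly D v \<noteq> 0"
    "poly C0 v / poly D0 v = poly C v / poly D v" "\<And>t. t \<in> k \<Longrightarrow> poly C t = 0 \<Longrightarrow> poly D t \<noteq> 0"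
    using reduced_fraction[OF sf v(2) C0D0(1,2) transcendental_poly_nonzero[OF tv C0D0(2,3)]]
    by blast
  have eqs: "v = poly P x / poly Q x" "x = poly C v / poly D v"
    using P0Q0(4) PQ(4) C0D0(4) CD(4) by simp_all
  have "mutually_rational k x v P Q C D"
    by unfold_locales (fact sf tx v(2) PQ(1-3,5) CD(1-3,5) eqs)+
  then show ?thesis by (rule that)
qed

context mutually_rational
begin

lemma homogenized_power_relation:
  assumes F: "poly_over k F" and A: "poly_over k A" and B: "poly_over k B" "B \<noteq> 0"
    and y_power_n: "y ^ n = poly F x" and u_power_n: "(poly A x / poly B x * y ^ m) ^ n = poly F v"
  shows "A ^ n * F ^ m * Q ^ degree F = B ^ n * homogenize F P Q (degree F)"
proof (rule transcendental_poly_eq[OF x_transcendental subfield])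
  show "poly_over k (A ^ n * F ^ m * Q ^ degree F)"
    using subfield A F Q by (intro poly_over_mult poly_over_power)
  show "poly_over k (B ^ n * homogenize F P Q (degree F))"
    using subfield B F P Q by (intro poly_over_mult poly_over_power poly_over_homogenize)
  have "(y ^ m) ^ n = (y ^ n) ^ m" by (simp only: power_mult[symmetric] mult.commute)
  then have "poly F v = (poly A x / poly B x) ^ n * (y ^ n) ^ m"
    using u_power_n by (simp only: power_mult_distrib)
  moreover have "poly (homogenize F P Q (degree F)) x = poly Q x ^ degree F * poly F v"
    unfolding v_eq by (rule poly_homogenize[OF order_refl Q(2)])
  ultimately show "poly (A ^ n * F ^ m * Q ^ degree F) x = poly (B ^ n * homogenize F P Q (degree F)) x"
    using transcendental_poly_nonzero[OF x_transcendental B] unfolding y_power_n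
    by (simp add: power_divide field_simps)
qed

text \<open>At a root \<open>r\<close> of \<open>F\<close> that is not the pole of \<open>v\<close>, the right-hand side of the relation
  above vanishes to order at most 1, the left-hand side to order \<open>m\<close> modulo \<open>n\<close>.\<close>

lemma power_exponent_le_1:
  assumes ac: "alg_closed_subfield k"
    and F: "poly_over k F" "rsquarefree F" "degree F \<ge> 2"
    and A: "poly_over k A" "A \<noteq> 0" and B: "poly_over k B" "B \<noteq> 0"
    and y_power_n: "y ^ n = poly F x" and u_power_n: "(poly A x / poly B x * y ^ m) ^ n = poly F v"
    and m: "m < n"
  shows "m \<le> 1"
proof -
  obtain r1 r2 where "r1 \<in> k" "r2 \<in> k" "r1 \<noteq> r2" "poly F r1 = 0" "poly F r2 = 0"
    by (rule rsquarefree_two_roots[OF ac F])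
  then obtain r where r: "r \<in> k" "poly F r = 0" "poly Q r \<noteq> 0"
    using denominator_root_unique by blast
  define H where "H = homogenize F P Q (degree F)"
  have H: "H \<noteq> 0" "order r H \<le> 1"
    using order_homogenize_le_1[OF subfield x_transcendental F(1,2) _ P Q(1) Q_nonzero r(1,3)]
      fibre_order_eq_1[OF r(1,3)] F(3)
    unfolding H_def by auto
  have "F \<noteq> 0" using F(2) unfolding rsquarefree_def by simp
  then have "order r (A ^ n * F ^ m * Q ^ degree F)
      = n * order r A + m * order r F + degree F * order r Q"
    using A(2) Q_nonzero by (simp add: order_mult order_power)
  then have "order r (A ^ n * F ^ m * Q ^ degree F) = n * order r A + m"
    using rsquarefree_root_order[OF F(2) r(2) \<open>F \<noteq> 0\<close>] order_0I[OF r(3)] by simp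
  moreover have "order r (B ^ n * H) = n * order r B + order r H"
    using H B(2) by (simp add: order_mult order_power)
  ultimately have "n * order r A + m = n * order r B + order r H"
    using homogenized_power_relation[OF F(1) A(1) B y_power_n u_power_n] unfolding H_def by simp
  then show "m \<le> 1" using H(2) m by (rule remainder_le_1_of_mult_add_eq)
qed

end

section \<open>Rational superelliptic curves\<close>

lemma fraction_eq_iff_cross_mult:
  assumes sf: "is_subfield k" and tz: "transcendental_over k z"
    and C: "poly_over k C" "poly_over k D" "D \<noteq> 0" and C': "poly_over k C'" "poly_over k D'" "D' \<noteq> 0"
  shows "poly C z / poly D z = poly C' z / poly D' z \<longleftrightarrow> C * D' = C' * D"
proof -
  have "poly D z \<noteq> 0" "poly D' z \<noteq> 0" using transcendental_poly_nonzero[OF tz] C C' by auto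
  then have "poly C z / poly D z = poly C' z / poly D' z \<longleftrightarrow> poly (C * D') z = poly (C' * D) z"
    by (simp add: frac_eq_eq)
  also have "\<dots> \<longleftrightarrow> C * D' = C' * D"
    using transcendental_poly_eq[OF tz sf poly_over_mult[OF sf C(1) C'(2)] poly_over_mult[OF sf C'(1) C(2)]]
    by (auto simp del: poly_mult)
  finally show ?thesis .
qed

definition rational_substitution :: "'a::field set \<Rightarrow> 'a \<Rightarrow> 'a \<Rightarrow> 'a \<Rightarrow> 'a" where
  "rational_substitution k z w a = (SOME c. \<exists>C D. poly_over k C \<and> poly_over k D \<and> D \<noteq> 0 \<and>
     a = poly C z / poly D z \<and> c = poly C w / poly D w)"

lemma rational_substitution_eq:
  assumes sf: "is_subfield k" and tz: "transcendental_over k z" and tw: "transcendental_over k w"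
    and C: "poly_over k C" "poly_over k D" "D \<noteq> 0"
  shows "rational_substitution k z w (poly C z / poly D z) = poly C w / poly D w"
proof -
  let ?rep = "\<lambda>c. \<exists>C' D'. poly_over k C' \<and> poly_over k D' \<and> D' \<noteq> 0 \<and>
    poly C z / poly D z = poly C' z / poly D' z \<and> c = poly C' w / poly D' w"
  have "?rep (poly C w / poly D w)" using C by blast
  then have "?rep (rational_substitution k z w (poly C z / poly D z))"
    unfolding rational_substitution_def by (rule someI)
  then obtain C' D' where C': "poly_over k C'" "poly_over k D'" "D' \<noteq> 0"
    and eq: "poly C z / poly D z = poly C' z / poly D' z"
    and subst: "rational_substitution k z w (poly C z / poly D z) = poly C' w / poly D' w"
    by blast
  show ?thesis
    using eq subst fraction_eq_iff_cross_mult[OF sf tz C C'] fraction_eq_iff_cross_mult[OF sf tw C C']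
    by simp
qed

context
  fixes k :: "'a::field set" and z w :: 'a
  assumes sf: "is_subfield k"
    and tz: "transcendental_over k z" and tw: "transcendental_over k w"
begin

lemma rational_substitution_add_mult:
  assumes "a \<in> rational_functions k z" "b \<in> rational_functions k z"
  shows "rational_substitution k z w (a + b) = rational_substitution k z w a + rational_substitution k z w b"
    "rational_substitution k z w (a * b) = rational_substitution k z w a * rational_substitution k z w b"
proof -
  let ?\<phi> = "rational_substitution k z w"
  note subst = rational_substitution_eq[OF sf tz tw]
  obtain C1 D1 where 1: "poly_over k C1" "poly_over k D1" "D1 \<noteq> 0" "a = poly C1 z / poly D1 z"
    using assms(1) by (rule rational_functionsE)
  obtain C2 D2 where 2: "poly_over k C2" "poly_over k D2" "D2 \<noteq> 0" "b = poly C2 z / poly D2 z"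
    using assms(2) by (rule rational_functionsE)
  have nonzero: "poly D1 u \<noteq> 0" "poly D2 u \<noteq> 0" if "transcendental_over k u" for u
    using transcendental_poly_nonzero[OF that] 1 2 by auto
  have DD: "poly_over k (D1 * D2)" "D1 * D2 \<noteq> 0" using 1 2 sf poly_over_mult by auto
  have sum_eq: "a + b = poly (C1 * D2 + C2 * D1) z / poly (D1 * D2) z"
    unfolding 1(4) 2(4) using nonzero[OF tz] by (simp add: field_simps)
  have "poly_over k (C1 * D2 + C2 * D1)" using 1 2 sf by (intro poly_over_add poly_over_mult)
  then have "?\<phi> (a + b) = poly (C1 * D2 + C2 * D1) w / poly (D1 * D2) w"
    unfolding sum_eq by (rule subst[OF _ DD])
  also have "\<dots> = ?\<phi> a + ?\<phi> b"
    unfolding 1(4) 2(4) subst[OF 1(1-3)] subst[OF 2(1-3)] using nonzero[OF tw]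
    by (simp add: field_simps)
  finally show "?\<phi> (a + b) = ?\<phi> a + ?\<phi> b" .
  have prod_eq: "a * b = poly (C1 * C2) z / poly (D1 * D2) z" unfolding 1(4) 2(4) by simp
  have "poly_over k (C1 * C2)" using 1 2 sf by (intro poly_over_mult)
  then have "?\<phi> (a * b) = poly (C1 * C2) w / poly (D1 * D2) w"
    unfolding prod_eq by (rule subst[OF _ DD])
  also have "\<dots> = ?\<phi> a * ?\<phi> b"
    unfolding 1(4) 2(4) subst[OF 1(1-3)] subst[OF 2(1-3)] by simp
  finally show "?\<phi> (a * b) = ?\<phi> a * ?\<phi> b" .
qed

lemma rational_substitution_inj_on: "inj_on (rational_substitution k z w) (rational_functions k z)"
proof (rule inj_onI)
  fix a b
  assume "a \<in> rational_functions k z" "b \<in> rational_functions k z"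
    and eq: "rational_substitution k z w a = rational_substitution k z w b"
  then obtain C1 D1 C2 D2 where 1: "poly_over k C1" "poly_over k D1" "D1 \<noteq> 0" "a = poly C1 z / poly D1 z"
    and 2: "poly_over k C2" "poly_over k D2" "D2 \<noteq> 0" "b = poly C2 z / poly D2 z"
    by (metis rational_functionsE)
  note subst = rational_substitution_eq[OF sf tz tw]
  show "a = b"
    using eq unfolding 1(4) 2(4) subst[OF 1(1-3)] subst[OF 2(1-3)]
      fraction_eq_iff_cross_mult[OF sf tz 1(1-3) 2(1-3)] fraction_eq_iff_cross_mult[OF sf tw 1(1-3) 2(1-3)] .
qed

lemma rational_substitution_image:
  "rational_substitution k z w ` rational_functions k z = rational_functions k w"
  using rational_substitution_eq[OF sf tz tw]
  unfolding rational_functions_def by (auto simp: image_iff) metis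

lemma rational_substitution_Aut:
  assumes gz: "field_gen k {z} = UNIV" and gw: "field_gen k {w} = UNIV"
  shows "rational_substitution k z w \<in> Aut k"
proof -
  let ?\<phi> = "rational_substitution k z w"
  note subst = rational_substitution_eq[OF sf tz tw]
  have p1: "poly_over k 1" using sf by (rule poly_over_1)
  have Kz: "rational_functions k z = UNIV" and Kw: "rational_functions k w = UNIV"
    using rational_functions_UNIV sf tz gz tw gw by auto
  have "bij ?\<phi>"
    using rational_substitution_inj_on rational_substitution_image unfolding Kz Kw
    by (simp add: bij_def)
  moreover have "?\<phi> 1 = 1" using subst[OF p1 p1] by simp
  moreover have "?\<phi> c = c" if "c \<in> k" for c using subst[OF poly_over_const[OF sf that] p1] by simp
  ultimately show ?thesis
    using rational_substitution_add_mult unfolding Kz Aut_def by blast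
qed

lemma rational_substitution_generator: "rational_substitution k z w z = w"
  using rational_substitution_eq[OF sf tz tw poly_over_X[OF sf] poly_over_1[OF sf]] by simp

end

lemma affine_generator:
  assumes sf: "is_subfield k" and gy: "field_gen k {y} = UNIV" and y: "y \<notin> k"
    and a: "a \<in> k" "a \<noteq> 0" and b: "b \<in> k"
  shows "field_gen k {a * y + b} = UNIV" "a * y + b \<notin> k"
proof -
  have y_eq: "y = (a * y + b - b) / a" using a(2) by simp
  let ?L = "field_gen k {a * y + b}"
  have "k \<subseteq> ?L" "a * y + b \<in> ?L" using field_gen_superset[of k "{a * y + b}"] by auto
  then have "y \<in> ?L"
    using field_gen_subfield a(1) b by (subst y_eq) (blast intro: subfield_divide subfieldD(4))
  then show "?L = UNIV"
    using field_gen_UNIV_imp_subfield_UNIV[OF gy field_gen_subfield] \<open>k \<subseteq> ?L\<close> by blast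
  show "a * y + b \<notin> k"
  proof
    assume "a * y + b \<in> k"
    then have "y \<in> k" using sf a b by (subst y_eq) (blast intro: subfield_divide subfieldD(4))
    then show False using y by simp
  qed
qed

lemma superelliptic_model_of_generator:
  assumes ac: "alg_closed_subfield k" and gz: "field_gen k {z} = UNIV" and z: "z \<notin> k"
    and n: "n \<ge> 2"
  shows "superelliptic_model k n (z ^ n) z [:0, 1:]"
proof -
  have sf: "is_subfield k" using ac by (rule alg_closed_subfield_is_subfield)
  have "z ^ n \<notin> k"
  proof
    assume zn: "z ^ n \<in> k"
    have "poly_over k (monom 1 n - [:z ^ n:])"
      using sf zn by (intro poly_over_diff poly_over_const) (auto simp: poly_over_def coeff_monom subfieldD)
    moreover have "monom 1 n - [:z ^ n:] \<noteq> 0"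
    proof
      assume "monom 1 n - [:z ^ n:] = 0"
      then have "coeff (monom 1 n) n = coeff [:z ^ n:] n" by simp
      then show False using n by (simp add: coeff_pCons split: nat.splits)
    qed
    moreover have "poly (monom 1 n - [:z ^ n:]) z = 0" by (simp add: poly_monom)
    ultimately show False using alg_closed_root_in_subfield[OF ac] z by blast
  qed
  moreover have "field_gen k {z ^ n, z} = UNIV"
    using field_gen_UNIV_imp_subfield_UNIV[OF gz field_gen_subfield] field_gen_superset[of k "{z ^ n, z}"]
    by blast
  moreover have "rsquarefree [:0, 1 :: 'a:]"
    unfolding rsquarefree_def using order_degree[of "[:0, 1 :: 'a:]"] by (simp add: le_Suc_eq)
  ultimately show ?thesis
    unfolding superelliptic_model_def
    using n alg_closed_transcendental_iff[OF ac] poly_over_X[OF sf] by simp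
qed

lemma degree_one_model_generated_by_y:
  assumes sf: "is_subfield k" and model: "superelliptic_model k n x y F" and deg: "degree F = 1"
  shows "field_gen k {y} = UNIV" "y \<notin> k"
proof -
  have m: "transcendental_over k x" "field_gen k {x, y} = UNIV" "poly_over k F" "y ^ n = poly F x"
    using model unfolding superelliptic_model_def by auto
  have "coeff F 1 \<noteq> 0" using deg by (metis leading_coeff_0_iff one_neq_zero degree_0)
  moreover have "poly F x = coeff F 0 + coeff F 1 * x"
    unfolding poly_altdef deg by (simp add: mult.commute)
  ultimately have x_eq: "x = (y ^ n - coeff F 0) / coeff F 1" using m(4) by (simp add: field_simps)
  have coeffs: "coeff F 0 \<in> k" "coeff F 1 \<in> k" using m(3) by (auto simp: poly_over_coeff)
  have in_subfield: "x \<in> L" if "is_subfield L" "k \<subseteq> L" "y \<in> L" for L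
    using that coeffs by (subst x_eq) (blast intro: subfield_divide subfieldD(4) subfield_power)
  have "k \<union> {x, y} \<subseteq> field_gen k {y}"
    using in_subfield[OF field_gen_subfield] field_gen_superset[of k "{y}"] by blast
  then show "field_gen k {y} = UNIV"
    using field_gen_UNIV_imp_subfield_UNIV[OF m(2) field_gen_subfield] by blast
  show "y \<notin> k" using in_subfield[OF sf] transcendental_not_in[OF m(1) sf] by blast
qed

text \<open>For \<open>deg F = 1\<close> the function field is \<open>k(y)\<close>. The automorphism \<open>y \<mapsto> \<xi> y + \<xi> - 1\<close> scales
  \<open>y + 1\<close> by \<open>\<xi>\<close>, so it generates the superelliptic group of the model \<open>((y + 1)\<^sup>n, y + 1)\<close>;
  it is not a power of \<open>s\<close> because those fix \<open>y = 0\<close> rather than \<open>y = -1\<close>.\<close>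

lemma degree_one_superelliptic_group_not_unique:
  assumes ac: "alg_closed_subfield k"
    and model: "superelliptic_model k n x y F" and deg: "degree F = 1"
    and \<xi>: "\<xi> \<in> k" "primitive_root n \<xi>"
    and s: "s \<in> Aut k" "s x = x" "s y = \<xi> * y"
  shows "\<exists>G'. superelliptic_group k n G' \<and> G' \<noteq> {s ^^ j | j. True}"
proof -
  have sf: "is_subfield k" using ac by (rule alg_closed_subfield_is_subfield)
  have n: "n \<ge> 2" using model unfolding superelliptic_model_def by simp
  have gy: "field_gen k {y} = UNIV" and y: "y \<notin> k"
    using degree_one_model_generated_by_y[OF sf model deg] by auto
  have "\<xi> \<noteq> 0" using \<xi>(2) n unfolding primitive_root_def by (auto simp: power_0_left)
  have "\<xi> \<noteq> 1" using primitive_root_neq_1[OF \<xi>(2) n] .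
  define w where "w = \<xi> * y + (\<xi> - 1)"
  have "\<xi> - 1 \<in> k" using sf \<xi>(1) by (auto intro: subfieldD)
  then have gw: "field_gen k {w} = UNIV" and w: "w \<notin> k"
    unfolding w_def using affine_generator[OF sf gy y \<xi>(1) \<open>\<xi> \<noteq> 0\<close>] by auto
  define \<phi> where "\<phi> = rational_substitution k y w"
  have ty: "transcendental_over k y" and tw: "transcendental_over k w"
    using alg_closed_transcendental_iff[OF ac] y w by auto
  have \<phi>: "\<phi> \<in> Aut k" "\<phi> y = w"
    unfolding \<phi>_def using rational_substitution_Aut[OF sf ty tw gy gw]
      rational_substitution_generator[OF sf ty tw] by auto
  define y' where "y' = y + 1"
  have gy': "field_gen k {y'} = UNIV" and y': "y' \<notin> k"
    unfolding y'_def using affine_generator[OF sf gy y, of 1 1] subfieldD(2)[OF sf] by auto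
  have \<phi>y': "\<phi> y' = \<xi> * y'" unfolding y'_def using \<phi> by (simp add: AutD w_def algebra_simps)
  have "\<phi> (y' ^ n) = y' ^ n"
    using \<phi>y' \<xi>(2) unfolding primitive_root_def by (simp add: Aut_power[OF \<phi>(1)] power_mult_distrib)
  then have group: "superelliptic_group k n {\<phi> ^^ j | j. True}"
    unfolding superelliptic_group_def
    using superelliptic_model_of_generator[OF ac gy' y' n] \<xi> \<phi>(1) \<phi>y' by blast
  have "\<phi> \<notin> {s ^^ j | j. True}"
  proof
    assume "\<phi> \<in> {s ^^ j | j. True}"
    then obtain i where "\<phi> = s ^^ i" by blast
    then have "\<xi> * y + (\<xi> - 1) = \<xi> ^ i * y"
      using \<phi>(2) Aut_funpow_scale[OF s(1) sf \<xi>(1) s(3)] unfolding w_def by simp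
    then have eq: "(\<xi> - \<xi> ^ i) * y = 1 - \<xi>" by (simp add: algebra_simps)
    then have "\<xi> - \<xi> ^ i \<noteq> 0" using \<open>\<xi> \<noteq> 1\<close> by auto
    then have "y = (1 - \<xi>) / (\<xi> - \<xi> ^ i)" using eq by (simp add: field_simps)
    then have "y \<in> k" using sf \<xi>(1) by (auto intro!: subfield_divide subfieldD(4) subfield_power intro: subfieldD)
    then show False using y by simp
  qed
  moreover have "\<phi> \<in> {\<phi> ^^ j | j. True}" by (rule generator_in_powers)
  ultimately show ?thesis using group by blast
qed

section \<open>Conjugates of the superelliptic automorphism\<close>

context superelliptic_automorphism
begin

lemma conjugate_superelliptic_automorphism:
  assumes \<tau>: "\<tau> \<in> Aut k"
  shows "superelliptic_automorphism k n (\<tau> x) (\<tau> y) F \<xi> (\<tau> \<circ> s \<circ> inv \<tau>)"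
proof
  show "superelliptic_model k n (\<tau> x) (\<tau> y) F"
    by (rule Aut_image_superelliptic_model[OF model \<tau>])
  show "\<tau> \<circ> s \<circ> inv \<tau> \<in> Aut k" using \<tau> Aut by (intro Aut_comp Aut_inv)
  show "(\<tau> \<circ> s \<circ> inv \<tau>) (\<tau> x) = \<tau> x" using Aut_inv_left[OF \<tau>] fixes_x by simp
  show "(\<tau> \<circ> s \<circ> inv \<tau>) (\<tau> y) = \<xi> * \<tau> y"
    using Aut_inv_left[OF \<tau>] scales_y AutD(3,5)[OF \<tau>] root_in_subfield by simp
qed (fact subfield root_in_subfield primitive)+

lemma funpow_eq_self_iff: "s ^^ j = s \<longleftrightarrow> \<xi> ^ j = \<xi>"
proof
  assume "s ^^ j = s"
  then have "\<xi> ^ j * y = \<xi> * y" using funpow_scales_y[of j] scales_y by metis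
  then show "\<xi> ^ j = \<xi>" using y_nonzero by auto
next
  assume "\<xi> ^ j = \<xi>"
  then show "s ^^ j = s"
    by (intro Aut_eqI_on_generators[OF Aut_funpow[OF Aut] Aut generates])
      (auto simp: funpow_fixes_x funpow_scales_y fixes_x scales_y)
qed

lemma funpow_conjugate: "((\<tau> \<circ> s \<circ> inv \<tau>) ^^ i) z = \<tau> ((s ^^ i) (inv \<tau> z))" if "\<tau> \<in> Aut k"
  by (induction i) (simp_all add: Aut_inv_left[OF that] Aut_inv_right[OF that])

lemma conjugate_generated_images:
  assumes \<tau>: "\<tau> \<in> Aut k" and l: "s = (\<tau> \<circ> s \<circ> inv \<tau>) ^^ l"
  shows "s (\<tau> x) = \<tau> x" "s (\<tau> y) = \<xi> ^ l * \<tau> y"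
proof -
  have "s (\<tau> z) = \<tau> ((s ^^ l) z)" for z
    using arg_cong[OF l, of "\<lambda>f. f (\<tau> z)"] funpow_conjugate[OF \<tau>, of l] Aut_inv_left[OF \<tau>] by simp
  then show "s (\<tau> x) = \<tau> x" "s (\<tau> y) = \<xi> ^ l * \<tau> y"
    using funpow_fixes_x funpow_scales_y AutD(3,5)[OF \<tau>]
      subfield_power[OF subfield root_in_subfield] by simp_all
qed

lemma conjugate_eq_if_same_group:
  assumes ac: "alg_closed_subfield k" and deg: "degree F \<ge> 2" and \<tau>: "\<tau> \<in> Aut k"
    and j: "\<tau> \<circ> s \<circ> inv \<tau> = s ^^ j" and l: "s = (\<tau> \<circ> s \<circ> inv \<tau>) ^^ l"
  shows "\<tau> \<circ> s \<circ> inv \<tau> = s"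
proof -
  interpret conj: superelliptic_automorphism k n "\<tau> x" "\<tau> y" F \<xi> "\<tau> \<circ> s \<circ> inv \<tau>"
    by (rule conjugate_superelliptic_automorphism[OF \<tau>])
  have jl: "\<xi> ^ (j * l) = \<xi>"
    using j l funpow_eq_self_iff[of "j * l"] by (simp add: funpow_mult)
  define m where "m = l mod n"
  have m: "m < n" unfolding m_def using n_ge_2 by simp
  have l_m: "\<xi> ^ l = \<xi> ^ m" unfolding m_def using power_mod_order[OF root_power_n] .
  obtain A B where AB: "poly_over k A" "poly_over k B" "B \<noteq> 0" "\<tau> y = poly A x / poly B x * y ^ m"
    using eigenvector_form[OF m] conjugate_generated_images(2)[OF \<tau> l] l_m by metis
  have "A \<noteq> 0" using AB(4) conj.y_nonzero by auto
  have v: "\<tau> x \<in> Kx"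
    using eigenvector_form[of 0 "\<tau> x"] conjugate_generated_images(1)[OF \<tau> l] n_ge_2
    by (auto intro: rational_functionsI)
  have "(\<tau> \<circ> s \<circ> inv \<tau>) x = \<xi> ^ 0 * x" using j funpow_fixes_x by simp
  then have x: "x \<in> rational_functions k (\<tau> x)"
    using conj.eigenvector_form[of 0 x] n_ge_2 by (auto intro: rational_functionsI)
  obtain P Q C D where "mutually_rational k x (\<tau> x) P Q C D"
    using mutually_rational_exists[OF ac x_transcendental v _ x]
      transcendental_not_in[OF conj.x_transcendental subfield] by blast
  then have "m \<le> 1"
    using mutually_rational.power_exponent_le_1[OF _ ac _ _ deg AB(1) \<open>A \<noteq> 0\<close> AB(2,3) y_power_n _ m]
      model conj.y_power_n AB(4) unfolding superelliptic_model_def by auto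
  moreover have "m \<noteq> 0"
  proof
    assume "m = 0"
    then have "\<xi> ^ (j * l) = 1" using l_m by (simp add: power_mult mult.commute[of j])
    then show False using jl primitive_root_neq_1[OF primitive n_ge_2] by simp
  qed
  ultimately have "m = 1" by simp
  then have "\<xi> ^ l = \<xi>" using l_m by simp
  then have "\<xi> ^ j = \<xi>" using jl by (simp add: power_mult mult.commute[of j])
  then show ?thesis using j funpow_eq_self_iff by simp
qed

end

theorem lemma4p22:
  fixes k :: "'a::field set" and n :: nat and G :: "('a \<Rightarrow> 'a) set"
  assumes "alg_closed_subfield k"
    and "superelliptic_curve k n"
    and "superelliptic_group k n G"
    and "finite G" and "card G = n"
    and "\<forall>G'. superelliptic_group k n G' \<longrightarrow> G' = G"
  shows "\<forall>\<sigma>\<in>G. \<forall>\<tau>\<in>Aut k. \<sigma> \<circ> \<tau> = \<tau> \<circ> \<sigma>"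
proof (intro ballI)
  obtain x y F \<xi> s where model: "superelliptic_model k n x y F" and \<xi>: "\<xi> \<in> k" "primitive_root n \<xi>"
    and s: "s \<in> Aut k" "s x = x" "s y = \<xi> * y" and G: "G = {s ^^ j | j. True}"
    using assms(3) unfolding superelliptic_group_def by blast
  interpret superelliptic_automorphism k n x y F \<xi> s
    using alg_closed_subfield_is_subfield[OF assms(1)] model \<xi> s by unfold_locales
  have "degree F \<noteq> 1"
    using degree_one_superelliptic_group_not_unique[OF assms(1) model _ \<xi> s] assms(6) G by blast
  moreover have "degree F > 0" using model unfolding superelliptic_model_def by simp
  ultimately have "degree F \<ge> 2" by simp
  fix \<sigma> \<tau> assume "\<sigma> \<in> G" "\<tau> \<in> Aut k"
  interpret conj: superelliptic_automorphism k n "\<tau> x" "\<tau> y" F \<xi> "\<tau> \<circ> s \<circ> inv \<tau>"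
    by (rule conjugate_superelliptic_automorphism[OF \<open>\<tau> \<in> Aut k\<close>])
  have "{(\<tau> \<circ> s \<circ> inv \<tau>) ^^ j | j. True} = G"
    using assms(6) conj.model \<xi> conj.Aut conj.fixes_x conj.scales_y
    unfolding superelliptic_group_def by blast
  then obtain i j l where "\<sigma> = s ^^ i" "\<tau> \<circ> s \<circ> inv \<tau> = s ^^ j" "s = (\<tau> \<circ> s \<circ> inv \<tau>) ^^ l"
    using \<open>\<sigma> \<in> G\<close> generator_in_powers[of s] generator_in_powers[of "\<tau> \<circ> s \<circ> inv \<tau>"] G by blast
  then have conj_eq: "\<tau> \<circ> s \<circ> inv \<tau> = s"
    by (intro conjugate_eq_if_same_group[OF assms(1) \<open>degree F \<ge> 2\<close> \<open>\<tau> \<in> Aut k\<close>])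
  have "\<tau> \<circ> s = (\<tau> \<circ> s \<circ> inv \<tau>) \<circ> \<tau>" using Aut_inv_left[OF \<open>\<tau> \<in> Aut k\<close>] by (simp add: fun_eq_iff)
  then have "s \<circ> \<tau> = \<tau> \<circ> s" unfolding conj_eq by simp
  then show "\<sigma> \<circ> \<tau> = \<tau> \<circ> \<sigma>" unfolding \<open>\<sigma> = s ^^ i\<close> by (rule funpow_comp_commute)
qed

end
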